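(* Consider the remote-attestation Stackelberg game described in the context with a single device $\delta$ (so $\mathcal{D}=\{\delta\}$ and the only device class is $\mathcal{E}=\{\delta\}$) and a single attestation method $m$ (so $\mathcal{M}=\{m\}$). Let the defender's strategy be $p_\delta^m\in[0,1]$ and define $$\tau_\delta=\frac{1}{\mu^m}\cdot\frac{C_A^{\mathcal{E}}+C_A^\delta-G_A^\delta}{L_A^\delta-G_A^\delta}.$$ Then the attacker's best-response set is $$\mathcal{F}(\vec p)=\begin{cases}\{1\}&\text{if } p_\delta^m<\tau_\delta,\\ \{0,1\}&\text{if } p_\delta^m=\tau_\delta,\\ \{0\}&\text{otherwise.}\end{cases}$$
   Context: Remote-attestation game: there is a finite set $\mathcal{D}$ of devices partitioned into pairwise disjoint device classes $\mathcal{E}_1,\dots,\mathcal{E}_n$ (with $\bigcup_i\mathcal{E}_i=\mathcal{D}$), and a finite set $\mathcal{M}$ of attestation methods. Constants: for each method $m$, a detection probability $\mu^m$ (probability that running $m$ on a compromised device detects the compromise) and a defender cost $C_D^m$ of running $m$ on a device; for each device $\delta$, an attacker cost $C_A^\delta$ of attacking $\delta$; for each class $\mathcal{E}$, an attacker cost $C_A^{\mathcal{E}}$ of developing an exploit for $\mathcal{E}$; for each device $\delta$, defender gain $G_D^\delta$ and loss $L_D^\delta$, attacker gain $G_A^\delta$ and loss $L_A^\delta$ (losses are represented as negative values), with $G_D^\delta=-L_A^\delta$ and $L_D^\delta=-G_A^\delta$. The defender (leader) chooses $\vec p=\langle p_\delta^m\rangle\in[0,1]^{|\mathcal{D}\times\mathcal{M}|}$,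 where $p_\delta^m$ is the probability of running method $m$ on device $\delta$; the attacker (follower) chooses $\vec a=\langle a_\delta\rangle\in\{0,1\}^{|\mathcal{D}|}$ ($a_\delta=1$ means attacking $\delta$). Detection probability: $P_\delta(\vec p)=1-\prod_{m\in\mathcal{M}}(1-\mu^m p_\delta^m)$. Defender cost $C_D^T(\vec p)=\sum_{\delta}\sum_m C_D^m p_\delta^m$. Defender utility $U_D(\vec p,\vec a)=\sum_{\delta}[G_D^\delta P_\delta(\vec p)+L_D^\delta(1-P_\delta(\vec p))]a_\delta-C_D^T(\vec p)$. Attacker cost $C_A^T(\vec a)=\sum_{\mathcal{E}}\big(C_A^{\mathcal{E}}\cdot 1_{\{\exists\delta\in\mathcal{E}:a_\delta=1\}}+\sum_{\delta\in\mathcal{E}}C_A^\delta a_\delta\big)$. Attacker utility $U_A(\vec p,\vec a)=\sum_\delta[L_A^\delta P_\delta(\vec p)+G_A^\delta(1-P_\delta(\vec p))]a_\delta-C_A^T(\vec a)$. The attacker's best-response set is $\mathcal{F}(\vec p)=\operatorname{argmax}_{\vec a}U_A(\vec p,\vec a)$. *)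

theory Defs
  imports Complex_Main
begin

text \<open>Devices D, methods M, device classes Es (a partition of D).
  Defender strategy p d m (probability of running method m on device d);
  attacker strategy a d in {0,1} (real-valued 0/1, zero outside D).\<close>

definition detect_prob :: "'m set \<Rightarrow> ('m \<Rightarrow> real) \<Rightarrow> ('d \<Rightarrow> 'm \<Rightarrow> real) \<Rightarrow> 'd \<Rightarrow> real" where
  "detect_prob M mu p d = 1 - (\<Prod>m\<in>M. (1 - mu m * p d m))"

definition attacker_cost ::
  "'d set set \<Rightarrow> ('d set \<Rightarrow> real) \<Rightarrow> ('d \<Rightarrow> real) \<Rightarrow> ('d \<Rightarrow> real) \<Rightarrow> real" where
  "attacker_cost Es CAE CAd a =
     (\<Sum>E\<in>Es. CAE E * (if \<exists>d\<in>E. a d = 1 then 1 else 0) + (\<Sum>d\<in>E. CAd d * a d))"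

definition attacker_utility ::
  "'d set \<Rightarrow> 'm set \<Rightarrow> 'd set set \<Rightarrow> ('m \<Rightarrow> real) \<Rightarrow> ('d set \<Rightarrow> real) \<Rightarrow> ('d \<Rightarrow> real)
   \<Rightarrow> ('d \<Rightarrow> real) \<Rightarrow> ('d \<Rightarrow> real) \<Rightarrow> ('d \<Rightarrow> 'm \<Rightarrow> real) \<Rightarrow> ('d \<Rightarrow> real) \<Rightarrow> real" where
  "attacker_utility D M Es mu CAE CAd GA LA p a =
     (\<Sum>d\<in>D. (LA d * detect_prob M mu p d + GA d * (1 - detect_prob M mu p d)) * a d)
     - attacker_cost Es CAE CAd a"

definition attacker_strategies :: "'d set \<Rightarrow> ('d \<Rightarrow> real) set" where
  "attacker_strategies D = {a. (\<forall>d\<in>D. a d \<in> {0, 1}) \<and> (\<forall>d. d \<notin> D \<longrightarrow> a d = 0)}"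

definition best_response ::
  "'d set \<Rightarrow> 'm set \<Rightarrow> 'd set set \<Rightarrow> ('m \<Rightarrow> real) \<Rightarrow> ('d set \<Rightarrow> real) \<Rightarrow> ('d \<Rightarrow> real)
   \<Rightarrow> ('d \<Rightarrow> real) \<Rightarrow> ('d \<Rightarrow> real) \<Rightarrow> ('d \<Rightarrow> 'm \<Rightarrow> real) \<Rightarrow> ('d \<Rightarrow> real) set" where
  "best_response D M Es mu CAE CAd GA LA p =
     {a \<in> attacker_strategies D.
        \<forall>a' \<in> attacker_strategies D.
          attacker_utility D M Es mu CAE CAd GA LA p a' \<le> attacker_utility D M Es mu CAE CAd GA LA p a}"

end

theory Submission
  imports Defs
begin

text \<open>With a single device the attacker has only two pure strategies: staying idle, worth 0,
  and attacking, worth \<open>G\<^sub>A + \<mu> p (L\<^sub>A - G\<^sub>A) - C\<^sub>A\<^sup>E - C\<^sub>A\<^sup>\<delta>\<close>. Since \<open>L\<^sub>A < G\<^sub>A\<close>, the latter is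
  strictly decreasing in \<open>p\<close> and vanishes exactly at \<open>p = \<tau>\<close>, so its sign decides the best
  response.\<close>

lemma attacker_strategies_singleton:
  "attacker_strategies {d} = {(\<lambda>_. 0), (\<lambda>_. 0)(d := 1)}"
  unfolding attacker_strategies_def by (auto simp: fun_eq_iff)

lemma attacker_utility_no_attack:
  "attacker_utility D M Es mu CAE CAd GA LA p (\<lambda>_. 0) = 0"
  by (simp add: attacker_utility_def attacker_cost_def)

lemma attacker_utility_single_attack:
  "attacker_utility {d} {m} {{d}} mu CAE CAd GA LA p ((\<lambda>_. 0)(d := 1)) =
     mu m * p d m * (LA d - GA d) - (CAE {d} + CAd d - GA d)"
  by (simp add: attacker_utility_def attacker_cost_def detect_prob_def algebra_simps)

lemma best_response_singleton:
  fixes d :: 'd and m :: 'm and mu CAE CAd GA LA and p :: "'d \<Rightarrow> 'm \<Rightarrow> real"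
  defines "U \<equiv> attacker_utility {d} {m} {{d}} mu CAE CAd GA LA p ((\<lambda>_. 0)(d := 1))"
  shows "best_response {d} {m} {{d}} mu CAE CAd GA LA p =
           (if 0 < U then {(\<lambda>_. 0)(d := 1)}
            else if U = 0 then {(\<lambda>_. 0), (\<lambda>_. 0)(d := 1)}
            else {(\<lambda>_. 0)})"
proof -
  have "(\<lambda>_. 0) \<noteq> ((\<lambda>_. 0)(d := 1) :: 'd \<Rightarrow> real)"
    by (auto simp: fun_eq_iff)
  then show ?thesis
    unfolding best_response_def attacker_strategies_singleton U_def
    by (auto simp: attacker_utility_no_attack)
qed

lemma less_threshold_iff:
  fixes \<mu> c g x :: real
  assumes "0 < \<mu>" "g < 0"
  shows "x < (1 / \<mu>) * (c / g) \<longleftrightarrow> c < \<mu> * x * g"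
proof -
  have "\<mu> * g < 0"
    using assms by (simp add: mult_pos_neg)
  then show ?thesis
    by (simp add: neg_less_divide_eq mult_ac)
qed

lemma eq_threshold_iff:
  fixes \<mu> c g x :: real
  assumes "\<mu> \<noteq> 0" "g \<noteq> 0"
  shows "x = (1 / \<mu>) * (c / g) \<longleftrightarrow> \<mu> * x * g = c"
  using assms by (auto simp: field_simps)

theorem lemma1:
  fixes \<delta> :: 'd and m :: 'm
    and mu :: "'m \<Rightarrow> real" and CAE :: "'d set \<Rightarrow> real" and CAd GA LA :: "'d \<Rightarrow> real"
    and p :: "'d \<Rightarrow> 'm \<Rightarrow> real" and \<tau> :: real
  assumes mu_pos: "0 < mu m" and mu_le: "mu m \<le> 1"
    and LA_neg: "LA \<delta> < 0" and GA_nonneg: "0 \<le> GA \<delta>"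
    and p_range: "0 \<le> p \<delta> m" "p \<delta> m \<le> 1"
    and tau_def: "\<tau> = (1 / mu m) * ((CAE {\<delta>} + CAd \<delta> - GA \<delta>) / (LA \<delta> - GA \<delta>))"
  shows "best_response {\<delta>} {m} {{\<delta>}} mu CAE CAd GA LA p =
           (if p \<delta> m < \<tau> then {(\<lambda>_. 0)(\<delta> := 1)}
            else if p \<delta> m = \<tau> then {(\<lambda>_. 0), (\<lambda>_. 0)(\<delta> := 1)}
            else {(\<lambda>_. 0)})"
proof -
  have gap_neg: "LA \<delta> - GA \<delta> < 0"
    using LA_neg GA_nonneg by linarith
  let ?U = "attacker_utility {\<delta>} {m} {{\<delta>}} mu CAE CAd GA LA p ((\<lambda>_. 0)(\<delta> := 1))"
  have "p \<delta> m < \<tau> \<longleftrightarrow> 0 < ?U"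
    using less_threshold_iff[OF mu_pos gap_neg]
    by (simp add: tau_def attacker_utility_single_attack)
  moreover have "p \<delta> m = \<tau> \<longleftrightarrow> ?U = 0"
    using eq_threshold_iff[of "mu m" "LA \<delta> - GA \<delta>"] mu_pos gap_neg
    by (simp add: tau_def attacker_utility_single_attack)
  ultimately show ?thesis
    by (simp only: best_response_singleton)
qed

end
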